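(* Let $A$ be an abelian variety over $\mathbb{F}_q$, with angle rank $\delta=\delta_A$ and angle torsion order $m=m_A$. Then $\mathrm{SF}(A)\cong\mathrm{U}(1)^{\delta}\times C_m$ as topological groups. Furthermore, the identity component of $\mathrm{SF}(A)$ equals $\mathrm{SF}(A_{(m)})$ (as subgroups of $\mathrm{U}(1)^g$), and $\mathrm{SF}(A)/\mathrm{SF}(A)^\circ\cong C_m$.
   Context: Let $q=p^d$ with $p$ prime. For an abelian variety $A$ of dimension $g$ over $\mathbb{F}_q$, let $P_A(T)$ be the characteristic polynomial of Frobenius (on an $\ell$-adic Tate module); its roots, listed with multiplicity, are $\alpha_1,\dots,\alpha_g,\bar\alpha_1,\dots,\bar\alpha_g$ with $|\alpha_j|=\sqrt q$ and $\arg(\alpha_i)\ge\arg(\alpha_j)$ for $i>j$; put $u_j=\alpha_j/\sqrt q\in\mathrm{U}(1)$. The Serre–Frobenius group $\mathrm{SF}(A)$ is the closure in $\mathrm{U}(1)^g$ of the subgroup generated by $(u_1,\dots,u_g)$. The angle group $U_A$ is the subgroup of $\mathbb{C}^\times$ generated by $u_1,\dots,u_g$; writing $U_A\cong\mathbb{Z}^{\delta_A}\oplus\mathbb{Z}/m_A\mathbb{Z}$, $\delta_A$ is the angle rank and $m_A$ the angle torsion order. $A_{(r)}$ denotes the base change of $A$ to $\mathbb{F}_{q^r}$ (its normalized eigenvalues are $u_1^r,\dots,u_g^r$). $C_m$ is the cyclic group of order $m$. *)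

theory Defs
  imports "HOL-Analysis.Analysis" "HOL-Computational_Algebra.Polynomial" "HOL-Algebra.Coset"
begin

text \<open>U(1)^g is modelled inside the product space nat => complex (product topology):
  points are functions with |x j| = 1 for j < g and x j = 1 for j >= g.\<close>

definition torus :: "nat \<Rightarrow> (nat \<Rightarrow> complex) set" where
  "torus g = {x. (\<forall>j<g. norm (x j) = 1) \<and> (\<forall>j\<ge>g. x j = 1)}"

definition tmul :: "(nat \<Rightarrow> complex) \<Rightarrow> (nat \<Rightarrow> complex) \<Rightarrow> (nat \<Rightarrow> complex)" where
  "tmul x y = (\<lambda>j. x j * y j)"

definition tone :: "nat \<Rightarrow> complex" where
  "tone = (\<lambda>j. 1)"

text \<open>Serre--Frobenius group of the normalized eigenvalue vector (u_1,...,u_g):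
  the closure of the cyclic subgroup it generates (its integer powers).\<close>
definition SF :: "nat \<Rightarrow> (nat \<Rightarrow> complex) \<Rightarrow> (nat \<Rightarrow> complex) set" where
  "SF g u = closure (range (\<lambda>k::int. (\<lambda>j. if j < g then u j powi k else 1)))"

definition angle_group :: "nat \<Rightarrow> (nat \<Rightarrow> complex) \<Rightarrow> complex set" where
  "angle_group g u = {z. \<exists>n::nat \<Rightarrow> int. z = (\<Prod>j<g. u j powi n j)}"

text \<open>The cyclic group C_m, realized as the m-th roots of unity.\<close>
definition roots_unity :: "nat \<Rightarrow> complex set" where
  "roots_unity m = {z. z ^ m = 1}"

definition SF_group :: "nat \<Rightarrow> (nat \<Rightarrow> complex) \<Rightarrow> (nat \<Rightarrow> complex) monoid" where
  "SF_group g u = \<lparr>carrier = SF g u, mult = tmul, one = tone\<rparr>"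

definition cyclic_group :: "nat \<Rightarrow> complex monoid" where
  "cyclic_group m = \<lparr>carrier = roots_unity m, mult = (*), one = 1\<rparr>"

end

theory Submission
  imports Defs
begin

(* The isomorphism psi exhibits the angle group as free of rank delta on generators gen_i times
   cyclic of order m on zeta. Expressing each u_j as a monomial in gen and zeta, and conversely,
   gives a continuous monomial homomorphism Phi with Phi (gen^k, zeta^k) = u^k and a continuous
   monomial map Psi undoing it at the points (gen^k, zeta^k). The gen_i^m are multiplicatively
   independent, so by Kronecker's theorem these points are dense in U(1)^delta x mu_m, and the
   points (gen^(mk), 1) are dense in U(1)^delta x {1}. Compactness then gives
   SF(A) = Phi (U(1)^delta x mu_m) with inverse Psi, and SF(A_(m)) = Phi (U(1)^delta x {1}).
   The second coordinate of Psi is a continuous homomorphism onto the finite group mu_m = C_m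
   whose kernel is this connected subgroup, which is therefore the identity component. *)

lemma power_int_of_hom_int:
  fixes f :: "int \<Rightarrow> 'a::field"
  assumes add: "\<And>a b. f (a + b) = f a * f b" and nz: "f 1 \<noteq> 0"
  shows "f k = f 1 powi k"
proof -
  have f0: "f 0 = 1" using add[of 1 0] nz by simp
  show ?thesis
  proof (induction k rule: int_induct[where k=0])
    case base then show ?case by (simp add: f0)
  next
    case (step1 i) then show ?case using add[of i 1] nz
      by (simp add: power_int_add)
  next
    case (step2 i)
    have "f i = f (i - 1) * f 1" using add[of "i - 1" 1] by simp
    then show ?case using step2 nz
      by (simp add: power_int_diff field_simps)
  qed
qed

lemma prod_power_int:
  fixes f :: "'b \<Rightarrow> 'a::field"
  shows "(\<Prod>x\<in>A. f x) powi k = (\<Prod>x\<in>A. f x powi k)"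
  by (induction A rule: infinite_finite_induct) (auto simp: power_int_mult_distrib)

lemma tendsto_fun_componentwise:
  fixes f :: "'a \<Rightarrow> 'b \<Rightarrow> 'c::topological_space"
  assumes "\<And>i. ((\<lambda>x. f x i) \<longlongrightarrow> l i) F"
  shows "(f \<longlongrightarrow> l) F"
proof -
  have "limitin (product_topology (\<lambda>_. euclidean) UNIV) f l F"
    using assms by (simp add: limitin_componentwise)
  then show ?thesis by (simp add: euclidean_product_topology)
qed

lemma eq_on_closure_if_continuous:
  fixes f g :: "'a::topological_space \<Rightarrow> 'b::metric_space"
  assumes "continuous_on (closure D) f" "continuous_on (closure D) g"
    and "\<And>x. x \<in> D \<Longrightarrow> f x = g x" and "x \<in> closure D"
  shows "f x = g x"
proof -
  have "closedin (top_of_set (closure D)) {y \<in> closure D. f y = g y}"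
    using closedin_continuous_maps_eq[of euclidean "top_of_set (closure D)" f g] assms(1,2)
    by simp
  then have "closed {y \<in> closure D. f y = g y}"
    using closedin_closed_trans by blast
  moreover have "D \<subseteq> {y \<in> closure D. f y = g y}" using assms(3) closure_subset by blast
  ultimately show ?thesis using assms(4) closure_minimal by blast
qed

lemma closure_range_eq_if_approximable:
  fixes f :: "'b \<Rightarrow> 'a::first_countable_topology"
  assumes "closed S" and "range f \<subseteq> S" and "\<And>x. x \<in> S \<Longrightarrow> \<exists>k. (\<lambda>n. f (k n)) \<longlonglongrightarrow> x"
  shows "closure (range f) = S"
proof (rule subset_antisym)
  show "closure (range f) \<subseteq> S" by (rule closure_minimal[OF assms(2,1)])
  show "S \<subseteq> closure (range f)"
  proof
    fix x assume "x \<in> S"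
    then obtain k where "(\<lambda>n. f (k n)) \<longlonglongrightarrow> x" using assms(3) by blast
    then show "x \<in> closure (range f)"
      unfolding closure_sequential by (intro exI[of _ "\<lambda>n. f (k n)"]) auto
  qed
qed

lemma closure_image_eq_image_closure:
  fixes f :: "'a::topological_space \<Rightarrow> 'b::t2_space"
  assumes "continuous_on (closure D) f" and "compact (closure D)"
  shows "closure (f ` D) = f ` closure D"
proof
  have "compact (f ` closure D)" using assms compact_continuous_image by blast
  then show "closure (f ` D) \<subseteq> f ` closure D"
    by (intro closure_minimal image_mono closure_subset compact_imp_closed)
  show "f ` closure D \<subseteq> closure (f ` D)"
    using assms(1) by (rule continuous_image_closure_subset) simp
qed

section \<open>Kronecker's theorem on the unit circle\<close>

lemma exp_2pi_Arg:
  assumes "norm z = 1"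
  shows "exp (2 * pi * \<i> * of_real (Arg z / (2 * pi))) = z"
proof -
  have "exp (2 * pi * \<i> * of_real (Arg z / (2 * pi))) = cis (Arg z)"
    by (simp add: cis_conv_exp field_simps)
  also have "\<dots> = sgn z" using assms by (intro cis_Arg) auto
  also have "\<dots> = z" using assms by (simp add: sgn_div_norm)
  finally show ?thesis .
qed

lemma exp_2pi_add_int: "exp (2 * pi * \<i> * of_real (x + of_int h)) = exp (2 * pi * \<i> * of_real x)"
proof -
  have "exp (2 * pi * \<i> * of_real (x + of_int h)) = exp (2 * pi * \<i> * of_real x) * exp ((2 * of_int h * pi) * \<i>)"
    by (simp add: exp_add algebra_simps)
  also have "exp ((2 * of_int h * pi) * \<i>) = 1" by (rule exp_integer_2pi) simp
  finally show ?thesis by simp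
qed

lemma inj_on_if_int_independent:
  fixes \<theta> :: "nat \<Rightarrow> real"
  assumes indep: "\<And>c::nat \<Rightarrow> int. (\<Sum>i\<le>n. of_int (c i) * \<theta> i) = 0 \<Longrightarrow> \<forall>i\<le>n. c i = 0"
  shows "inj_on \<theta> {..n}"
proof (rule inj_onI, rule ccontr)
  fix i j assume ij: "i \<in> {..n}" "j \<in> {..n}" "\<theta> i = \<theta> j" "i \<noteq> j"
  define c where "c = (\<lambda>k. if k = i then 1 else if k = j then -1 else 0::int)"
  have "(\<Sum>k\<le>n. of_int (c k) * \<theta> k) = (\<Sum>k\<le>n. (if k = i then \<theta> i else 0) - (if k = j then \<theta> j else 0))"
    by (rule sum.cong) (auto simp: c_def ij)
  also have "\<dots> = 0" using ij by (simp add: sum_subtractf)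
  finally have "\<forall>k\<le>n. c k = 0" by (rule indep)
  then show False using ij by (auto simp: c_def)
qed

lemma module_independent_if_int_independent:
  fixes \<theta> :: "nat \<Rightarrow> real"
  assumes indep: "\<And>c::nat \<Rightarrow> int. (\<Sum>i\<le>n. of_int (c i) * \<theta> i) = 0 \<Longrightarrow> \<forall>i\<le>n. c i = 0"
  shows "module.independent (\<lambda>r x. of_int r * x) (\<theta> ` {..n})"
proof -
  interpret Modules.module "(\<lambda>r. (*) (real_of_int r))"
    by (simp add: Modules.module.intro distrib_left mult.commute)
  have inj: "inj_on \<theta> {..n}" using indep by (rule inj_on_if_int_independent)
  show ?thesis unfolding independent_explicit_module
  proof (intro allI impI)
    fix T c v assume T: "finite T" "T \<subseteq> \<theta> ` {..n}" "(\<Sum>v\<in>T. of_int (c v) * v) = 0" "v \<in> T"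
    define S where "S = {k. k \<le> n \<and> \<theta> k \<in> T}"
    define c' where "c' = (\<lambda>k. if \<theta> k \<in> T then c (\<theta> k) else 0)"
    have "(\<Sum>k\<le>n. of_int (c' k) * \<theta> k) = (\<Sum>k\<in>S. of_int (c (\<theta> k)) * \<theta> k)"
      unfolding c'_def S_def by (rule sum.mono_neutral_cong_right) auto
    also have "\<dots> = (\<Sum>x\<in>\<theta> ` S. of_int (c x) * x)"
      by (rule sum.reindex[symmetric, unfolded comp_def]) (rule inj_on_subset[OF inj], auto simp: S_def)
    also have "\<theta> ` S = T" using T(2) by (auto simp: S_def)
    finally have "\<forall>k\<le>n. c' k = 0" using T(3) indep by auto
    moreover obtain k where "k \<le> n" "v = \<theta> k" using T by auto
    ultimately show "c v = 0" using T(4) by (auto simp: c'_def)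
  qed
qed

text \<open>The angles of multiplicatively independent points of the unit circle are, together with 1,
  linearly independent over the integers, so the additive form of Kronecker's theorem applies.\<close>

lemma Kronecker_unit_powers:
  fixes w t :: "nat \<Rightarrow> complex"
  assumes norm_w: "\<forall>i<n. norm (w i) = 1" and norm_t: "\<forall>i<n. norm (t i) = 1"
    and indep: "\<And>c::nat \<Rightarrow> int. (\<Prod>i<n. w i powi c i) = 1 \<Longrightarrow> \<forall>i<n. c i = 0"
  shows "\<exists>k :: nat \<Rightarrow> int. \<forall>i<n. (\<lambda>N. w i powi k N) \<longlonglongrightarrow> t i"
proof -
  define \<theta> where "\<theta> i = (if i < n then Arg (w i) / (2 * pi) else 1)" for i
  define \<alpha> where "\<alpha> i = Arg (t i) / (2 * pi)" for i
  have w_powi: "w i powi k = exp (2 * pi * \<i> * of_real (of_int k * \<theta> i))" if "i < n" for i k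
  proof -
    have "w i powi k = exp (2 * pi * \<i> * of_real (Arg (w i) / (2 * pi))) powi k"
      using exp_2pi_Arg[of "w i"] norm_w that by simp
    also have "\<dots> = exp (2 * pi * \<i> * of_real (of_int k * \<theta> i))"
      using that by (simp add: exp_power_int \<theta>_def mult_ac)
    finally show ?thesis .
  qed
  have t_eq: "t i = exp (2 * pi * \<i> * of_real (\<alpha> i))" if "i < n" for i
    using exp_2pi_Arg[of "t i"] norm_t that by (simp add: \<alpha>_def)
  have int_indep: "\<forall>i\<le>n. c i = 0" if sum0: "(\<Sum>i\<le>n. of_int (c i) * \<theta> i) = 0" for c :: "nat \<Rightarrow> int"
  proof -
    have "(\<Sum>i<n. of_int (c i) * \<theta> i) + of_int (c n) = 0"
      using sum0 by (simp add: lessThan_Suc_atMost[symmetric] \<theta>_def)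
    then have sum_eq: "(\<Sum>i<n. of_int (c i) * \<theta> i) = 0 + of_int (- c n)" by simp
    have "(\<Prod>i<n. w i powi c i) = (\<Prod>i<n. exp (2 * pi * \<i> * of_real (of_int (c i) * \<theta> i)))"
      by (rule prod.cong) (simp_all add: w_powi)
    also have "\<dots> = exp (2 * pi * \<i> * of_real (\<Sum>i<n. of_int (c i) * \<theta> i))"
      by (simp add: exp_sum sum_distrib_left)
    also have "\<dots> = 1" by (simp only: sum_eq exp_2pi_add_int) simp
    finally have "\<forall>i<n. c i = 0" by (rule indep)
    moreover from this sum0 have "c n = 0" by (simp add: lessThan_Suc_atMost[symmetric] \<theta>_def)
    ultimately show ?thesis by (auto simp: le_less)
  qed
  have Kronecker_hyps: "module.independent (\<lambda>r x. of_int r * x) (\<theta> ` {..n})" "inj_on \<theta> {..n}" "\<theta> n = 1"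
    by (rule module_independent_if_int_independent inj_on_if_int_independent int_indep
        | simp add: \<theta>_def)+
  have "\<exists>k h. \<forall>i<n. \<bar>of_int k * \<theta> i - of_int (h i) - \<alpha> i\<bar> < 1 / real (Suc N)" for N
  proof -
    obtain k h where "\<And>i. i < n \<Longrightarrow> \<bar>of_int k * \<theta> i - of_int (h i) - \<alpha> i\<bar> < 1 / real (Suc N)"
      using Kronecker_thm_2[OF Kronecker_hyps, of "1 / real (Suc N)" \<alpha>] by auto
    then show ?thesis by blast
  qed
  then obtain k h where kh: "\<And>N i. i < n \<Longrightarrow> \<bar>of_int (k N) * \<theta> i - of_int (h N i) - \<alpha> i\<bar> < 1 / real (Suc N)"
    by metis
  have "(\<lambda>N. w i powi k N) \<longlonglongrightarrow> t i" if i: "i < n" for i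
  proof -
    define x where "x N = of_int (k N) * \<theta> i - of_int (h N i) - \<alpha> i" for N
    have "x \<longlonglongrightarrow> 0" by (rule LIMSEQ_norm_0) (use kh[OF i] in \<open>simp add: x_def\<close>)
    then have "(\<lambda>N. exp (2 * pi * \<i> * of_real (x N + \<alpha> i))) \<longlonglongrightarrow> exp (2 * pi * \<i> * of_real (0 + \<alpha> i))"
      by (intro tendsto_intros)
    moreover have "exp (2 * pi * \<i> * of_real (x N + \<alpha> i)) = w i powi k N" for N
      using exp_2pi_add_int[of "x N + \<alpha> i" "h N i"] by (simp add: w_powi[OF i] x_def)
    ultimately show ?thesis by (simp add: t_eq[OF i])
  qed
  then show ?thesis by blast
qed

lemma continuous_on_monomial:
  "continuous_on {x :: nat \<Rightarrow> complex. \<forall>j<n. x j \<noteq> 0} (\<lambda>x. \<Prod>j<n. x j powi e j)"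
  by (intro continuous_on_prod continuous_on_power_int)
    (auto intro: continuous_on_subset[OF continuous_on_product_coordinates])

lemma torus_Suc: "torus (Suc n) = (\<lambda>(t, z). t(n := z)) ` (torus n \<times> sphere 0 1)"
proof (intro equalityI subsetI)
  fix y assume "y \<in> torus (Suc n)"
  then have "(y(n := 1), y n) \<in> torus n \<times> sphere 0 1" and "y = (\<lambda>(t, z). t(n := z)) (y(n := 1), y n)"
    by (auto simp: torus_def)
  then show "y \<in> (\<lambda>(t, z). t(n := z)) ` (torus n \<times> sphere 0 1)" by blast
qed (auto simp: torus_def)

lemma continuous_on_fun_upd:
  "continuous_on S (\<lambda>(t, z). (t :: 'a \<Rightarrow> 'b::topological_space)(n := z))"
proof (rule continuous_on_coordinatewise_then_product)
  fix i
  have "continuous_on S (\<lambda>p :: ('a \<Rightarrow> 'b) \<times> 'b. fst p i)"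
    by (intro continuous_on_compose2[OF continuous_on_product_coordinates continuous_on_fst]) auto
  then show "continuous_on S (\<lambda>p. (case p of (t, z) \<Rightarrow> t(n := z)) i)"
    by (cases "i = n") (simp_all add: case_prod_unfold continuous_on_snd)
qed

lemma compact_torus: "compact (torus n)"
  and connected_torus: "connected (torus n)"
proof (induction n)
  case 0
  have "torus 0 = {tone}" by (auto simp: torus_def tone_def)
  then show "compact (torus 0)" "connected (torus 0)" by simp_all
next
  case (Suc n)
  show "compact (torus (Suc n))" unfolding torus_Suc
    using Suc.IH(1) compact_sphere by (intro compact_continuous_image continuous_on_fun_upd compact_Times)
  show "connected (torus (Suc n))" unfolding torus_Suc
    using Suc.IH(2) connected_sphere[of "0::complex" 1]
    by (intro connected_continuous_image continuous_on_fun_upd connected_Times) auto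
qed

lemma torus_nonzero: "t \<in> torus n \<Longrightarrow> t j \<noteq> 0"
  by (cases "j < n") (auto simp: torus_def)

lemma roots_unity_nonzero: "m \<ge> 1 \<Longrightarrow> z \<in> roots_unity m \<Longrightarrow> z \<noteq> 0"
  by (auto simp: roots_unity_def power_0_left)

lemma finite_roots_unity_set: "m \<ge> 1 \<Longrightarrow> finite (roots_unity m)"
  unfolding roots_unity_def by (intro finite_roots_unity) simp

lemma group_cyclic_group:
  assumes "m \<ge> 1"
  shows "group (cyclic_group m)"
proof (rule groupI)
  fix x assume "x \<in> carrier (cyclic_group m)"
  then have xm: "x ^ m = 1" by (simp add: cyclic_group_def roots_unity_def)
  have "x ^ (m - 1) * x = 1" using assms xm by (metis Suc_diff_le diff_Suc_1 power_Suc2)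
  moreover have "(x ^ (m - 1)) ^ m = 1" using xm by (metis power_mult mult.commute power_one)
  ultimately show "\<exists>y\<in>carrier (cyclic_group m). y \<otimes>\<^bsub>cyclic_group m\<^esub> x = \<one>\<^bsub>cyclic_group m\<^esub>"
    by (auto simp: cyclic_group_def roots_unity_def)
qed (auto simp: cyclic_group_def roots_unity_def power_mult_distrib mult.assoc)

section \<open>A presentation of the angle group\<close>

definition pair_mul :: "(nat \<Rightarrow> complex) \<times> complex \<Rightarrow> (nat \<Rightarrow> complex) \<times> complex \<Rightarrow> (nat \<Rightarrow> complex) \<times> complex"
  where "pair_mul p q = (tmul (fst p) (fst q), snd p * snd q)"

locale angle_group_presentation =
  fixes g \<delta> m :: nat and u :: "nat \<Rightarrow> complex" and \<psi> :: "(nat \<Rightarrow> int) \<times> int \<Rightarrow> complex"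
  assumes norm_u: "\<forall>j<g. norm (u j) = 1" and m_pos: "m \<ge> 1"
    and psi_bij: "bij_betw \<psi> ({v. \<forall>j\<ge>\<delta>. v j = 0} \<times> {0..<int m}) (angle_group g u)"
    and psi_hom: "\<forall>a\<in>{v. \<forall>j\<ge>\<delta>. v j = 0} \<times> {0..<int m}. \<forall>b\<in>{v. \<forall>j\<ge>\<delta>. v j = 0} \<times> {0..<int m}.
        \<psi> (\<lambda>j. fst a j + fst b j, (snd a + snd b) mod int m) = \<psi> a * \<psi> b"
begin

definition lattice :: "(nat \<Rightarrow> int) set" where
  "lattice = {v. \<forall>j\<ge>\<delta>. v j = 0}"

definition chi :: "(nat \<Rightarrow> int) \<Rightarrow> int \<Rightarrow> complex" where
  "chi v r = \<psi> (v, r mod int m)"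

definition gen :: "nat \<Rightarrow> complex" where
  "gen i = chi (\<lambda>j. if j = i then 1 else 0) 0"

definition zeta :: complex where
  "zeta = chi (\<lambda>_. 0) 1"

lemma norm_angle_group: "z \<in> angle_group g u \<Longrightarrow> norm z = 1"
proof -
  assume "z \<in> angle_group g u"
  then obtain n where "z = (\<Prod>j<g. u j powi n j)" by (auto simp: angle_group_def)
  then have "norm z = (\<Prod>j<g. norm (u j) powi n j)" by (simp add: prod_norm[symmetric] norm_power_int)
  also have "\<dots> = 1" using norm_u by (intro prod.neutral) simp
  finally show ?thesis .
qed

lemma chi_in_angle_group: "v \<in> lattice \<Longrightarrow> chi v r \<in> angle_group g u"
  using psi_bij m_pos unfolding bij_betw_def chi_def lattice_def by auto

lemma norm_chi: "v \<in> lattice \<Longrightarrow> norm (chi v r) = 1"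
  by (rule norm_angle_group[OF chi_in_angle_group])

lemma chi_nonzero: "v \<in> lattice \<Longrightarrow> chi v r \<noteq> 0"
  by (metis norm_chi norm_zero zero_neq_one)

lemma chi_add: "v \<in> lattice \<Longrightarrow> w \<in> lattice \<Longrightarrow> chi (\<lambda>j. v j + w j) (r + s) = chi v r * chi w s"
  using psi_hom[rule_format, of "(v, r mod int m)" "(w, s mod int m)"] m_pos
  by (simp add: chi_def lattice_def mod_add_eq)

lemma chi_eq_1_iff: "v \<in> lattice \<Longrightarrow> chi v r = 1 \<longleftrightarrow> v = (\<lambda>_. 0) \<and> r mod int m = 0"
proof -
  assume v: "v \<in> lattice"
  have zero: "chi (\<lambda>_. 0) 0 = 1"
    using chi_add[of "\<lambda>_. 0" "\<lambda>_. 0" 0 0] chi_nonzero[of "\<lambda>_. 0" 0] by (simp add: lattice_def)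
  have "inj_on \<psi> (lattice \<times> {0..<int m})" using psi_bij by (simp add: bij_betw_def lattice_def)
  then have "\<psi> (v, r mod int m) = \<psi> (\<lambda>_. 0, 0) \<longleftrightarrow> (v, r mod int m) = (\<lambda>_. 0, 0)"
    using v m_pos by (intro inj_on_eq_iff) (auto simp: lattice_def)
  then show ?thesis using zero by (auto simp: chi_def)
qed

lemma chi_zero_left: "chi (\<lambda>_. 0) r = zeta powi r"
  unfolding zeta_def
  by (rule power_int_of_hom_int) (use chi_add[of "\<lambda>_. 0" "\<lambda>_. 0"] chi_nonzero in \<open>auto simp: lattice_def\<close>)

lemma chi_single: "i < \<delta> \<Longrightarrow> chi (\<lambda>j. if j = i then k else 0) 0 = gen i powi k"
  unfolding gen_def
  by (rule power_int_of_hom_int[where f = "\<lambda>k. chi (\<lambda>j. if j = i then k else 0) 0"])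
    (use chi_add[of "\<lambda>j. if j = i then _ else 0" "\<lambda>j. if j = i then _ else 0" 0 0] chi_nonzero
      in \<open>auto simp: lattice_def if_distrib cong: if_cong\<close>)

lemma chi_eq: "v \<in> lattice \<Longrightarrow> chi v r = (\<Prod>i<\<delta>. gen i powi v i) * zeta powi r"
proof -
  assume v: "v \<in> lattice"
  have "chi (\<lambda>j. if j < n then v j else 0) 0 = (\<Prod>i<n. gen i powi v i)" if "n \<le> \<delta>" for n
    using that
  proof (induction n)
    case 0 then show ?case using chi_eq_1_iff[of "\<lambda>_. 0" 0] by (simp add: lattice_def)
  next
    case (Suc n)
    have "(\<lambda>j. if j < Suc n then v j else 0) = (\<lambda>j. (if j < n then v j else 0) + (if j = n then v n else 0))"
      by (auto simp: less_Suc_eq)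
    moreover have "(\<lambda>j. if j < n then v j else 0) \<in> lattice" "(\<lambda>j. if j = n then v n else 0) \<in> lattice"
      using Suc.prems by (auto simp: lattice_def)
    ultimately show ?case
      using chi_add[of _ _ 0 0] chi_single[of n "v n"] Suc by simp
  qed
  moreover have "(\<lambda>j. if j < \<delta> then v j else 0) = v" using v by (auto simp: lattice_def)
  ultimately have "chi v 0 = (\<Prod>i<\<delta>. gen i powi v i)" by force
  moreover have "chi v r = chi v 0 * chi (\<lambda>_. 0) r"
    using chi_add[of v "\<lambda>_. 0" 0 r] v by (simp add: lattice_def)
  ultimately show ?thesis by (simp add: chi_zero_left)
qed

lemma norm_gen: "i < \<delta> \<Longrightarrow> norm (gen i) = 1"
  by (simp add: gen_def norm_chi lattice_def)

lemma norm_zeta: "norm zeta = 1"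
  by (simp add: zeta_def norm_chi lattice_def)

lemma gen_nonzero: "i < \<delta> \<Longrightarrow> gen i \<noteq> 0"
  using norm_gen by force

lemma zeta_nonzero: "zeta \<noteq> 0"
  using norm_zeta by force

lemma zeta_powi_eq_1_iff: "zeta powi r = 1 \<longleftrightarrow> int m dvd r"
  using chi_eq_1_iff[of "\<lambda>_. 0" r] by (simp add: chi_zero_left lattice_def dvd_eq_mod_eq_0)

lemma gen_pow_m_independent:
  assumes "(\<Prod>i<\<delta>. (gen i ^ m) powi c i) = 1"
  shows "\<forall>i<\<delta>. c i = 0"
proof -
  define v where "v i = (if i < \<delta> then int m * c i else 0)" for i
  have v: "v \<in> lattice" by (simp add: v_def lattice_def)
  have "chi v 0 = (\<Prod>i<\<delta>. (gen i ^ m) powi c i)"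
    unfolding chi_eq[OF v] by (auto simp: v_def power_int_power intro!: prod.cong)
  then have "v = (\<lambda>_. 0)" using chi_eq_1_iff[OF v] assms by simp
  then show ?thesis using m_pos by (metis (mono_tags) v_def mult_eq_0_iff of_nat_eq_0_iff not_one_le_zero)
qed

definition exps :: "nat \<Rightarrow> (nat \<Rightarrow> int) \<times> int" where
  "exps j = inv_into (lattice \<times> {0..<int m}) \<psi> (u j)"

definition angle_exps :: "complex \<Rightarrow> nat \<Rightarrow> int" where
  "angle_exps z = (SOME n. z = (\<Prod>j<g. u j powi n j))"

lemma u_eq: "j < g \<Longrightarrow> u j = (\<Prod>l<\<delta>. gen l powi fst (exps j) l) * zeta powi snd (exps j)"
proof -
  assume j: "j < g"
  have "u j = (\<Prod>i<g. u i powi (\<lambda>i. if i = j then 1 else 0) i)"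
    using j by (simp add: if_distrib prod.delta cong: if_cong)
  then have "u j \<in> angle_group g u"
    unfolding angle_group_def by (intro CollectI exI[of _ "\<lambda>i. if i = j then 1 else 0"])
  then have "u j \<in> \<psi> ` (lattice \<times> {0..<int m})"
    using psi_bij by (simp add: bij_betw_def lattice_def)
  then have "exps j \<in> lattice \<times> {0..<int m}" "\<psi> (exps j) = u j"
    unfolding exps_def by (auto intro: inv_into_into f_inv_into_f)
  then have "chi (fst (exps j)) (snd (exps j)) = u j"
    by (auto simp: chi_def)
  then show ?thesis using \<open>exps j \<in> _\<close> by (auto simp: chi_eq)
qed

lemma angle_exps: "z \<in> angle_group g u \<Longrightarrow> z = (\<Prod>j<g. u j powi angle_exps z j)"
  using someI_ex[of "\<lambda>n. z = (\<Prod>j<g. u j powi n j)"] unfolding angle_exps_def angle_group_def by blast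

lemma gen_eq: "i < \<delta> \<Longrightarrow> gen i = (\<Prod>j<g. u j powi angle_exps (gen i) j)"
  by (rule angle_exps) (simp add: gen_def chi_in_angle_group lattice_def)

lemma zeta_eq: "zeta = (\<Prod>j<g. u j powi angle_exps zeta j)"
  by (rule angle_exps) (simp add: zeta_def chi_in_angle_group lattice_def)

definition Phi :: "(nat \<Rightarrow> complex) \<times> complex \<Rightarrow> nat \<Rightarrow> complex" where
  "Phi p = (\<lambda>j. if j < g then (\<Prod>l<\<delta>. fst p l powi fst (exps j) l) * snd p powi snd (exps j) else 1)"

definition Psi :: "(nat \<Rightarrow> complex) \<Rightarrow> (nat \<Rightarrow> complex) \<times> complex" where
  "Psi x = ((\<lambda>i. if i < \<delta> then \<Prod>j<g. x j powi angle_exps (gen i) j else 1),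
            \<Prod>j<g. x j powi angle_exps zeta j)"

definition u_pow :: "int \<Rightarrow> nat \<Rightarrow> complex" where
  "u_pow k = (\<lambda>j. if j < g then u j powi k else 1)"

definition gen_pow :: "int \<Rightarrow> nat \<Rightarrow> complex" where
  "gen_pow k = (\<lambda>i. if i < \<delta> then gen i powi k else 1)"

lemma Phi_gen_pow: "Phi (gen_pow k, zeta powi k) = u_pow k"
proof
  fix j
  show "Phi (gen_pow k, zeta powi k) j = u_pow k j"
  proof (cases "j < g")
    case True
    have "Phi (gen_pow k, zeta powi k) j
        = (\<Prod>l<\<delta>. (gen l powi fst (exps j) l) powi k) * (zeta powi snd (exps j)) powi k"
      using True by (simp add: Phi_def gen_pow_def power_int_mult[symmetric] mult.commute)
    also have "\<dots> = u j powi k"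
      by (simp add: u_eq[OF True] prod_power_int power_int_mult_distrib)
    finally show ?thesis using True by (simp add: u_pow_def)
  qed (simp add: Phi_def u_pow_def)
qed

lemma Psi_u_pow: "Psi (u_pow k) = (gen_pow k, zeta powi k)"
proof -
  have powers: "(\<Prod>j<g. u_pow k j powi n j) = (\<Prod>j<g. u j powi n j) powi k" for n
    by (auto simp: u_pow_def prod_power_int power_int_mult[symmetric] mult.commute intro!: prod.cong)
  show ?thesis
    by (auto simp: Psi_def gen_pow_def powers simp flip: gen_eq zeta_eq)
qed

lemma Phi_pair_mul: "Phi (pair_mul p q) = tmul (Phi p) (Phi q)"
  by (auto simp: Phi_def pair_mul_def tmul_def power_int_mult_distrib prod.distrib)

lemma Psi_tmul: "Psi (tmul x y) = pair_mul (Psi x) (Psi y)"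
  by (auto simp: Psi_def pair_mul_def tmul_def power_int_mult_distrib prod.distrib)

lemma continuous_on_Phi: "continuous_on {p. (\<forall>l<\<delta>. fst p l \<noteq> 0) \<and> snd p \<noteq> 0} Phi"
proof (rule continuous_on_coordinatewise_then_product)
  have coord: "continuous_on S (\<lambda>p :: (nat \<Rightarrow> complex) \<times> complex. fst p l)" for S l
    by (intro continuous_on_compose2[OF continuous_on_product_coordinates continuous_on_fst]) auto
  fix j
  show "continuous_on {p. (\<forall>l<\<delta>. fst p l \<noteq> 0) \<and> snd p \<noteq> 0} (\<lambda>p. Phi p j)"
    unfolding Phi_def by (cases "j < g") (auto intro!: continuous_intros coord)
qed

lemma continuous_on_Psi: "continuous_on {x. \<forall>j<g. x j \<noteq> 0} Psi"
  unfolding Psi_def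
proof (intro continuous_on_Pair continuous_on_coordinatewise_then_product)
  fix i
  show "continuous_on {x :: nat \<Rightarrow> complex. \<forall>j<g. x j \<noteq> 0}
      (\<lambda>x. if i < \<delta> then \<Prod>j<g. x j powi angle_exps (gen i) j else 1)"
    using continuous_on_monomial[of g "angle_exps (gen i)"] by (cases "i < \<delta>") simp_all
qed (rule continuous_on_monomial)

lemma compact_torus_roots_unity: "compact (torus \<delta> \<times> roots_unity m)"
  by (intro compact_Times compact_torus finite_imp_compact finite_roots_unity_set[OF m_pos])

lemma torus_roots_unity_nonzero:
  "torus \<delta> \<times> roots_unity m \<subseteq> {p. (\<forall>l<\<delta>. fst p l \<noteq> 0) \<and> snd p \<noteq> 0}"
  using torus_nonzero roots_unity_nonzero[OF m_pos] by auto

lemma Phi_nonzero: "(\<forall>l<\<delta>. fst p l \<noteq> 0) \<and> snd p \<noteq> 0 \<Longrightarrow> \<forall>j<g. Phi p j \<noteq> 0"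
  by (simp add: Phi_def)

lemma continuous_on_Psi_Phi: "continuous_on (torus \<delta> \<times> roots_unity m) (\<lambda>p. Psi (Phi p))"
  using torus_roots_unity_nonzero Phi_nonzero
  by (intro continuous_on_compose2[OF continuous_on_Psi continuous_on_subset[OF continuous_on_Phi]]) auto

lemma gen_pow_approx:
  assumes "t \<in> torus \<delta>"
  obtains k :: "nat \<Rightarrow> int" where "(\<lambda>N. gen_pow (r + int m * k N)) \<longlonglongrightarrow> t"
proof -
  have "\<exists>k :: nat \<Rightarrow> int. \<forall>i<\<delta>. (\<lambda>N. (gen i ^ m) powi k N) \<longlonglongrightarrow> t i / gen i powi r"
    using norm_gen assms gen_pow_m_independent
    by (intro Kronecker_unit_powers) (simp_all add: norm_power norm_divide norm_power_int torus_def)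
  then obtain k :: "nat \<Rightarrow> int"
    where k: "\<And>i. i < \<delta> \<Longrightarrow> (\<lambda>N. (gen i ^ m) powi k N) \<longlonglongrightarrow> t i / gen i powi r"
    by blast
  have "(\<lambda>N. gen_pow (r + int m * k N) i) \<longlonglongrightarrow> t i" for i
  proof (cases "i < \<delta>")
    case True
    have "gen_pow (r + int m * k N) i = gen i powi r * (gen i ^ m) powi k N" for N
      using True gen_nonzero by (simp add: gen_pow_def power_int_add power_int_power)
    moreover have "(\<lambda>N. gen i powi r * (gen i ^ m) powi k N) \<longlonglongrightarrow> gen i powi r * (t i / gen i powi r)"
      by (intro tendsto_mult tendsto_const k True)
    ultimately show ?thesis using gen_nonzero[OF True] by simp
  qed (use assms in \<open>simp add: gen_pow_def torus_def\<close>)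
  then show ?thesis by (intro that tendsto_fun_componentwise)
qed

lemma roots_unity_eq_zeta_powers: "roots_unity m = (\<lambda>i. zeta ^ i) ` {..<m}"
proof -
  have "zeta ^ m = 1" using zeta_powi_eq_1_iff[of "int m"] by simp
  then have sub: "(\<lambda>i. zeta ^ i) ` {..<m} \<subseteq> roots_unity m"
    by (auto simp: roots_unity_def) (metis power_mult mult.commute power_one)
  have "inj_on (\<lambda>i. zeta ^ i) {..<m}"
  proof (rule linorder_inj_onI')
    fix i j assume ij: "i \<in> {..<m}" "j \<in> {..<m}" "i < j"
    show "zeta ^ i \<noteq> zeta ^ j"
    proof
      assume "zeta ^ i = zeta ^ j"
      then have "zeta powi (int j - int i) = 1"
        using zeta_nonzero by (simp add: power_int_diff)
      then have "int m dvd int j - int i" by (simp add: zeta_powi_eq_1_iff)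
      then show False using ij by (auto dest: zdvd_imp_le)
    qed
  qed
  then have "card ((\<lambda>i. zeta ^ i) ` {..<m}) = card (roots_unity m)"
    using m_pos card_roots_unity_eq[of m] by (simp add: card_image roots_unity_def)
  then show ?thesis using sub finite_roots_unity_set[OF m_pos] by (intro card_subset_eq[symmetric])
qed

lemma closure_gen_zeta_powers:
  "closure (range (\<lambda>k. (gen_pow k, zeta powi k))) = torus \<delta> \<times> roots_unity m"
proof (rule closure_range_eq_if_approximable)
  show "closed (torus \<delta> \<times> roots_unity m)"
    by (rule compact_imp_closed[OF compact_torus_roots_unity])
  have "gen_pow k \<in> torus \<delta>" for k
    using norm_gen by (simp add: gen_pow_def torus_def norm_power_int)
  moreover have "zeta powi k \<in> roots_unity m" for k
    by (simp add: roots_unity_def power_int_power' zeta_powi_eq_1_iff)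
  ultimately show "range (\<lambda>k. (gen_pow k, zeta powi k)) \<subseteq> torus \<delta> \<times> roots_unity m" by auto
  fix p assume p: "p \<in> torus \<delta> \<times> roots_unity m"
  then obtain i where i: "snd p = zeta ^ i" using roots_unity_eq_zeta_powers by (auto simp: mem_Times_iff)
  from p have "fst p \<in> torus \<delta>" by (simp add: mem_Times_iff)
  then obtain k where k: "(\<lambda>N. gen_pow (int i + int m * k N)) \<longlonglongrightarrow> fst p"
    by (rule gen_pow_approx)
  have "zeta powi (int i + int m * k N) = snd p" for N
    using zeta_nonzero by (simp add: i power_int_add zeta_powi_eq_1_iff)
  then have "(\<lambda>N. (gen_pow (int i + int m * k N), zeta powi (int i + int m * k N))) \<longlonglongrightarrow> p"
    using tendsto_Pair[OF k tendsto_const[of "snd p"]] by simp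
  then show "\<exists>k. (\<lambda>N. (gen_pow (k N), zeta powi (k N))) \<longlonglongrightarrow> p"
    by (rule exI[where x = "\<lambda>N. int i + int m * k N"])
qed

lemma closure_gen_m_powers:
  "closure (range (\<lambda>h. (gen_pow (int m * h), 1 :: complex))) = torus \<delta> \<times> {1}"
proof (rule closure_range_eq_if_approximable)
  show "closed (torus \<delta> \<times> {1::complex})"
    by (intro compact_imp_closed compact_Times compact_torus) simp
  show "range (\<lambda>h. (gen_pow (int m * h), 1 :: complex)) \<subseteq> torus \<delta> \<times> {1}"
    using norm_gen by (auto simp: gen_pow_def torus_def norm_power_int)
  fix p assume "p \<in> torus \<delta> \<times> {1::complex}"
  then obtain t where p: "p = (t, 1)" and t: "t \<in> torus \<delta>" by auto
  from t obtain k where "(\<lambda>N. gen_pow (0 + int m * k N)) \<longlonglongrightarrow> t"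
    by (rule gen_pow_approx)
  then have "(\<lambda>N. (gen_pow (int m * k N), 1::complex)) \<longlonglongrightarrow> p"
    unfolding p by (simp add: tendsto_Pair)
  then show "\<exists>k. (\<lambda>N. (gen_pow (int m * k N), 1 :: complex)) \<longlonglongrightarrow> p" by blast
qed

section \<open>The Serre--Frobenius group\<close>

lemma SF_eq_Phi_image: "SF g u = Phi ` (torus \<delta> \<times> roots_unity m)"
proof -
  let ?D = "range (\<lambda>k. (gen_pow k, zeta powi k))"
  have "SF g u = closure (Phi ` ?D)"
    by (simp add: SF_def image_image Phi_gen_pow u_pow_def)
  also have "\<dots> = Phi ` closure ?D"
    using continuous_on_subset[OF continuous_on_Phi torus_roots_unity_nonzero] compact_torus_roots_unity
    by (intro closure_image_eq_image_closure) (simp_all add: closure_gen_zeta_powers)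
  finally show ?thesis by (simp add: closure_gen_zeta_powers)
qed

lemma SF_pow_m_eq_Phi_image: "SF g (\<lambda>j. u j ^ m) = Phi ` (torus \<delta> \<times> {1})"
proof -
  let ?D = "range (\<lambda>h. (gen_pow (int m * h), 1 :: complex))"
  have "Phi (gen_pow (int m * h), 1) = u_pow (int m * h)" for h
    using Phi_gen_pow[of "int m * h"] zeta_powi_eq_1_iff[of "int m * h"] by simp
  then have "(\<lambda>h. \<lambda>j. if j < g then (u j ^ m) powi h else 1) = (\<lambda>h. Phi (gen_pow (int m * h), 1))"
    by (simp add: fun_eq_iff u_pow_def power_int_power)
  then have "SF g (\<lambda>j. u j ^ m) = closure (Phi ` ?D)"
    unfolding SF_def image_image by (rule arg_cong[where f = "\<lambda>f. closure (range f)"])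
  also have "\<dots> = Phi ` closure ?D"
  proof (rule closure_image_eq_image_closure)
    show "continuous_on (closure ?D) Phi"
      using torus_nonzero
      by (auto simp: closure_gen_m_powers intro: continuous_on_subset[OF continuous_on_Phi])
    show "compact (closure ?D)"
      by (simp add: closure_gen_m_powers compact_Times compact_torus)
  qed
  finally show ?thesis by (simp add: closure_gen_m_powers)
qed

lemma Psi_Phi:
  assumes "p \<in> torus \<delta> \<times> roots_unity m"
  shows "Psi (Phi p) = p"
proof -
  let ?D = "range (\<lambda>k. (gen_pow k, zeta powi k))"
  have "Psi (Phi p) = id p"
  proof (rule eq_on_closure_if_continuous[where f = "\<lambda>p. Psi (Phi p)" and g = id])
    show "continuous_on (closure ?D) (\<lambda>p. Psi (Phi p))"
      using continuous_on_Psi_Phi by (simp add: closure_gen_zeta_powers)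
    show "p \<in> closure ?D" using assms by (simp add: closure_gen_zeta_powers)
  qed (auto simp: Phi_gen_pow Psi_u_pow continuous_on_id)
  then show ?thesis by simp
qed

lemma Psi_in_and_Phi_Psi: "x \<in> SF g u \<Longrightarrow> Psi x \<in> torus \<delta> \<times> roots_unity m \<and> Phi (Psi x) = x"
  unfolding SF_eq_Phi_image by (auto simp: Psi_Phi)

lemma SF_nonzero: "x \<in> SF g u \<Longrightarrow> \<forall>j<g. x j \<noteq> 0"
  unfolding SF_eq_Phi_image using torus_roots_unity_nonzero Phi_nonzero by blast

lemma homeomorphic_map_Psi:
  "homeomorphic_map (top_of_set (SF g u)) (top_of_set (torus \<delta> \<times> roots_unity m)) Psi"
proof -
  have "continuous_map (top_of_set (SF g u)) (top_of_set (torus \<delta> \<times> roots_unity m)) Psi"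
    unfolding continuous_map_subtopology_eu
    using Psi_in_and_Phi_Psi SF_nonzero by (auto intro: continuous_on_subset[OF continuous_on_Psi])
  moreover have "continuous_map (top_of_set (torus \<delta> \<times> roots_unity m)) (top_of_set (SF g u)) Phi"
    unfolding continuous_map_subtopology_eu SF_eq_Phi_image
    by (auto intro: continuous_on_subset[OF continuous_on_Phi torus_roots_unity_nonzero])
  ultimately show ?thesis
    unfolding homeomorphic_map_maps homeomorphic_maps_def using Psi_in_and_Phi_Psi Psi_Phi by auto
qed

lemma Phi_tone: "Phi (tone, 1) = tone"
  by (simp add: Phi_def tone_def fun_eq_iff)

lemma Psi_tone: "Psi tone = (tone, 1)"
  by (simp add: Psi_def tone_def fun_eq_iff)

lemma Phi_image_subset_SF: "Phi ` (torus \<delta> \<times> {1}) \<subseteq> SF g u"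
  unfolding SF_eq_Phi_image using m_pos by (auto simp: roots_unity_def)

lemma SF_snd_Psi_eq_1: "{x \<in> SF g u. snd (Psi x) = 1} = Phi ` (torus \<delta> \<times> {1})"
proof (intro equalityI subsetI)
  fix x assume x: "x \<in> {x \<in> SF g u. snd (Psi x) = 1}"
  then have "Psi x \<in> torus \<delta> \<times> roots_unity m" "Phi (Psi x) = x"
    using Psi_in_and_Phi_Psi by auto
  with x have "Psi x \<in> torus \<delta> \<times> {1}" by (auto simp: mem_Times_iff)
  with \<open>Phi (Psi x) = x\<close> show "x \<in> Phi ` (torus \<delta> \<times> {1})" by (metis imageI)
next
  fix x assume "x \<in> Phi ` (torus \<delta> \<times> {1})"
  then obtain t where t: "t \<in> torus \<delta>" and x: "x = Phi (t, 1)" by blast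
  have "(t, 1) \<in> torus \<delta> \<times> roots_unity m" using t by (simp add: roots_unity_def)
  then show "x \<in> {x \<in> SF g u. snd (Psi x) = 1}"
    unfolding x SF_eq_Phi_image by (simp add: Psi_Phi)
qed

text \<open>The second coordinate of \<^const>\<open>Psi\<close> is continuous with values in the finite set of
  m-th roots of unity, hence constant on the connected component.\<close>

lemma connected_component_SF: "connected_component_set (SF g u) tone = Phi ` (torus \<delta> \<times> {1})"
proof
  show "Phi ` (torus \<delta> \<times> {1}) \<subseteq> connected_component_set (SF g u) tone"
  proof (rule connected_component_maximal)
    show "tone \<in> Phi ` (torus \<delta> \<times> {1})"
      using Phi_tone by (force simp: torus_def tone_def)
    show "connected (Phi ` (torus \<delta> \<times> {1}))"
      using connected_torus torus_nonzero
      by (intro connected_continuous_image continuous_on_subset[OF continuous_on_Phi] connected_Times) auto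
  qed (rule Phi_image_subset_SF)
next
  let ?C = "connected_component_set (SF g u) tone"
  have C_SF: "?C \<subseteq> SF g u" by (rule connected_component_subset)
  have "connected ((\<lambda>x. snd (Psi x)) ` ?C)"
    using C_SF SF_nonzero
    by (intro connected_continuous_image continuous_on_snd continuous_on_subset[OF continuous_on_Psi]) auto
  moreover have "(\<lambda>x. snd (Psi x)) ` ?C \<subseteq> roots_unity m"
    using C_SF Psi_in_and_Phi_Psi by (force simp: mem_Times_iff)
  then have "finite ((\<lambda>x. snd (Psi x)) ` ?C)" using finite_roots_unity_set[OF m_pos] finite_subset by blast
  moreover have "tone \<in> ?C"
    using Phi_image_subset_SF Phi_tone by (force simp: torus_def tone_def)
  ultimately obtain a where "(\<lambda>x. snd (Psi x)) ` ?C = {a}"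
    using connected_finite_iff_sing by blast
  moreover have "snd (Psi tone) \<in> (\<lambda>x. snd (Psi x)) ` ?C" using \<open>tone \<in> ?C\<close> by (rule imageI)
  ultimately have "(\<lambda>x. snd (Psi x)) ` ?C = {1}" by (simp add: Psi_tone)
  then have "?C \<subseteq> {x \<in> SF g u. snd (Psi x) = 1}" using C_SF by blast
  then show "?C \<subseteq> Phi ` (torus \<delta> \<times> {1})" by (simp add: SF_snd_Psi_eq_1)
qed

lemma pair_mul_closed:
  "p \<in> torus \<delta> \<times> roots_unity m \<Longrightarrow> q \<in> torus \<delta> \<times> roots_unity m \<Longrightarrow> pair_mul p q \<in> torus \<delta> \<times> roots_unity m"
  by (auto simp: pair_mul_def tmul_def torus_def roots_unity_def norm_mult power_mult_distrib)

lemma group_SF_group: "group (SF_group g u)"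
proof (rule groupI)
  fix x y assume "x \<in> carrier (SF_group g u)" "y \<in> carrier (SF_group g u)"
  then obtain p q where "p \<in> torus \<delta> \<times> roots_unity m" "q \<in> torus \<delta> \<times> roots_unity m"
    and "x = Phi p" "y = Phi q"
    unfolding SF_group_def SF_eq_Phi_image by auto
  then show "x \<otimes>\<^bsub>SF_group g u\<^esub> y \<in> carrier (SF_group g u)"
    unfolding SF_group_def SF_eq_Phi_image by (auto simp: Phi_pair_mul[symmetric] pair_mul_closed)
next
  show "\<one>\<^bsub>SF_group g u\<^esub> \<in> carrier (SF_group g u)"
    using Phi_image_subset_SF Phi_tone by (force simp: SF_group_def torus_def tone_def)
next
  fix x assume "x \<in> carrier (SF_group g u)"
  then obtain p where p: "p \<in> torus \<delta> \<times> roots_unity m" "x = Phi p"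
    unfolding SF_group_def SF_eq_Phi_image by auto
  define q where "q = ((\<lambda>i. inverse (fst p i)), inverse (snd p))"
  have q: "q \<in> torus \<delta> \<times> roots_unity m"
    using p by (auto simp: q_def torus_def roots_unity_def norm_inverse power_inverse)
  have "pair_mul q p = (tone, 1)"
    using p torus_nonzero roots_unity_nonzero[OF m_pos] by (auto simp: pair_mul_def q_def tmul_def tone_def)
  then have "tmul (Phi q) x = tone" by (simp add: p Phi_pair_mul[symmetric] Phi_tone)
  then show "\<exists>y\<in>carrier (SF_group g u). y \<otimes>\<^bsub>SF_group g u\<^esub> x = \<one>\<^bsub>SF_group g u\<^esub>"
    using q by (auto simp: SF_group_def SF_eq_Phi_image)
qed (auto simp: SF_group_def tmul_def tone_def mult.assoc)

lemma group_hom_snd_Psi: "group_hom (SF_group g u) (cyclic_group m) (\<lambda>x. snd (Psi x))"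
proof (rule group_hom.intro[OF group_SF_group group_cyclic_group[OF m_pos]])
  have "(\<lambda>x. snd (Psi x)) \<in> carrier (SF_group g u) \<rightarrow> carrier (cyclic_group m)"
    using Psi_in_and_Phi_Psi by (force simp: SF_group_def cyclic_group_def mem_Times_iff)
  then show "group_hom_axioms (SF_group g u) (cyclic_group m) (\<lambda>x. snd (Psi x))"
    by (simp add: group_hom_axioms_def hom_def SF_group_def cyclic_group_def Psi_tmul pair_mul_def)
qed

lemma SF_quotient_iso: "SF_group g u Mod connected_component_set (SF g u) tone \<cong> cyclic_group m"
proof -
  have "kernel (SF_group g u) (cyclic_group m) (\<lambda>x. snd (Psi x)) = connected_component_set (SF g u) tone"
    by (simp add: kernel_def SF_group_def cyclic_group_def connected_component_SF SF_snd_Psi_eq_1)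
  moreover have "(\<lambda>x. snd (Psi x)) ` carrier (SF_group g u) = carrier (cyclic_group m)"
  proof
    show "(\<lambda>x. snd (Psi x)) ` carrier (SF_group g u) \<subseteq> carrier (cyclic_group m)"
      using group_hom.hom_closed[OF group_hom_snd_Psi] by blast
    show "carrier (cyclic_group m) \<subseteq> (\<lambda>x. snd (Psi x)) ` carrier (SF_group g u)"
    proof
      fix z assume "z \<in> carrier (cyclic_group m)"
      then have "(tone, z) \<in> torus \<delta> \<times> roots_unity m"
        by (simp add: cyclic_group_def torus_def tone_def)
      then show "z \<in> (\<lambda>x. snd (Psi x)) ` carrier (SF_group g u)"
        using Psi_Phi unfolding SF_group_def SF_eq_Phi_image by (force intro: image_eqI)
    qed
  qed
  ultimately show ?thesis
    using group_hom.FactGroup_iso[OF group_hom_snd_Psi] by simp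
qed

end

theorem theoremE:
  fixes p d q g :: nat and P :: "int poly" and \<alpha> u :: "nat \<Rightarrow> complex"
    and \<delta> m :: nat and \<psi> :: "(nat \<Rightarrow> int) \<times> int \<Rightarrow> complex"
  assumes "prime p" and "d \<ge> 1" and "q = p ^ d"
    and charpoly: "map_poly of_int P = (\<Prod>j<g. [:- \<alpha> j, 1:] * [:- cnj (\<alpha> j), 1:])"
    and weil: "\<forall>j<g. norm (\<alpha> j) = sqrt (real q)"
    and upper: "\<forall>j<g. Im (\<alpha> j) \<ge> 0"
    and ordered: "\<forall>i<g. \<forall>j<i. Arg (\<alpha> i) \<ge> Arg (\<alpha> j)"
    and u_def: "\<forall>j. u j = \<alpha> j / complex_of_real (sqrt (real q))"
    and "m \<ge> 1"
    and psi_bij: "bij_betw \<psi> ({v. \<forall>j\<ge>\<delta>. v j = 0} \<times> {0..<int m}) (angle_group g u)"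
    and psi_hom: "\<forall>a\<in>{v. \<forall>j\<ge>\<delta>. v j = 0} \<times> {0..<int m}. \<forall>b\<in>{v. \<forall>j\<ge>\<delta>. v j = 0} \<times> {0..<int m}.
        \<psi> (\<lambda>j. fst a j + fst b j, (snd a + snd b) mod int m) = \<psi> a * \<psi> b"
  shows "(\<exists>\<phi>. homeomorphic_map (top_of_set (SF g u)) (top_of_set (torus \<delta> \<times> roots_unity m)) \<phi>
              \<and> (\<forall>x\<in>SF g u. \<forall>y\<in>SF g u. \<phi> (tmul x y) = (tmul (fst (\<phi> x)) (fst (\<phi> y)), snd (\<phi> x) * snd (\<phi> y))))
       \<and> connected_component_set (SF g u) tone = SF g (\<lambda>j. u j ^ m)
       \<and> SF_group g u Mod connected_component_set (SF g u) tone \<cong> cyclic_group m"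
proof -
  have "real q > 0" using \<open>prime p\<close> \<open>q = p ^ d\<close> by (simp add: prime_gt_0_nat)
  then interpret angle_group_presentation g \<delta> m u \<psi>
    using weil u_def \<open>m \<ge> 1\<close> psi_bij psi_hom by unfold_locales (simp_all add: norm_divide)
  have "\<forall>x\<in>SF g u. \<forall>y\<in>SF g u. Psi (tmul x y) = (tmul (fst (Psi x)) (fst (Psi y)), snd (Psi x) * snd (Psi y))"
    by (simp add: Psi_tmul pair_mul_def)
  then show ?thesis
    using homeomorphic_map_Psi connected_component_SF SF_pow_m_eq_Phi_image SF_quotient_iso by auto
qed

end
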